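(* Let $I$ be an $f$-ideal of $S=K[x_1,\ldots,x_n]$. For an integer $l\in[n]$ with $l<ldeg(I)$, $sm(S)_l\subseteq\sqcap^\infty(G(I))$. On the other hand, if $l>deg(I)$, then $sm(S)_l\subseteq\sqcup^\infty(G(I))$.
   Context: $K$ is a field; $sm(S)_l$ is the set of square-free monomials of degree $l$; $G(I)$ is the minimal monomial generating set; $ldeg(I)$ and $deg(I)$ are the minimal and maximal degrees of elements of $G(I)$. For a set $A$ of square-free monomials, $\sqcup(A)=\{gx_i\mid g\in A,\ x_i\nmid g\}$, $\sqcap(A)=\{h\ne1\mid h=g/x_i \text{ for some } g\in A,\ x_i\mid g\}$, $\sqcup^\infty(A)=\bigcup_{i\ge1}\sqcup^i(A)$, $\sqcap^\infty(A)=\bigcup_{i\ge1}\sqcap^i(A)$. With $\sigma$ the bijection $x_{i_1}\cdots x_{i_k}\mapsto\{i_1,\ldots,i_k\}$, the facet complex $\delta_{\mathcal{F}}(I)$ has facets $\sigma(g)$, $g\in G(I)$, the Stanley–Reisner complex is $\delta_{\mathcal{N}}(I)=\{\sigma(g)\mid g\text{ square-free monomial},\ g\notin I\}$, and a square-free monomial ideal $I$ is an $f$-ideal if both complexes have the same $f$-vector. *)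

theory Defs
  imports Main
begin

text \<open>A square-free monomial x_{i1}...x_{ik} of S = K[x_1,...,x_n] is identified,
  via sigma, with the subset {i1,...,ik} of {1..n}.  A square-free monomial ideal I
  is represented by the family of square-free monomials it contains (an up-closed
  family of subsets of {1..n}); this determines I.\<close>

definition sqfree_monomial_ideal :: "nat \<Rightarrow> nat set set \<Rightarrow> bool" where
  "sqfree_monomial_ideal n U \<longleftrightarrow>
     U \<subseteq> Pow {1..n} \<and> (\<forall>A\<in>U. \<forall>B. A \<subseteq> B \<and> B \<subseteq> {1..n} \<longrightarrow> B \<in> U)"

definition gens :: "nat set set \<Rightarrow> nat set set" where
  "gens U = {g \<in> U. \<forall>h\<in>U. h \<subseteq> g \<longrightarrow> h = g}"

definition ldeg :: "nat set set \<Rightarrow> nat" where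
  "ldeg U = Min (card ` gens U)"

definition deg :: "nat set set \<Rightarrow> nat" where
  "deg U = Max (card ` gens U)"

definition sm :: "nat \<Rightarrow> nat \<Rightarrow> nat set set" where
  "sm n l = {g. g \<subseteq> {1..n} \<and> card g = l}"

definition sq_cup :: "nat \<Rightarrow> nat set set \<Rightarrow> nat set set" where
  "sq_cup n A = {insert i g | g i. g \<in> A \<and> i \<in> {1..n} \<and> i \<notin> g}"

definition sq_cap :: "nat set set \<Rightarrow> nat set set" where
  "sq_cap A = {g - {i} | g i. g \<in> A \<and> i \<in> g \<and> g - {i} \<noteq> {}}"

definition sq_cup_inf :: "nat \<Rightarrow> nat set set \<Rightarrow> nat set set" where
  "sq_cup_inf n A = (\<Union>i\<in>{1..}. (sq_cup n ^^ i) A)"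

definition sq_cap_inf :: "nat set set \<Rightarrow> nat set set" where
  "sq_cap_inf A = (\<Union>i\<in>{1..}. (sq_cap ^^ i) A)"

definition facet_complex :: "nat set set \<Rightarrow> nat set set" where
  "facet_complex U = {F. \<exists>g\<in>gens U. F \<subseteq> g}"

definition sr_complex :: "nat \<Rightarrow> nat set set \<Rightarrow> nat set set" where
  "sr_complex n U = {F. F \<subseteq> {1..n} \<and> F \<notin> U}"

text \<open>f-vector: f_i = number of faces of dimension i (cardinality i+1), i \<ge> 0.\<close>
definition f_vector :: "nat set set \<Rightarrow> nat \<Rightarrow> nat" where
  "f_vector D i = card {F \<in> D. card F = i + 1}"

definition f_ideal :: "nat \<Rightarrow> nat set set \<Rightarrow> bool" where
  "f_ideal n U \<longleftrightarrow> sqfree_monomial_ideal n U \<and>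
     f_vector (facet_complex U) = f_vector (sr_complex n U)"

end

theory Submission
  imports Defs
begin

text \<open>In an f-ideal the facet complex and the Stanley-Reisner complex have the same number
  of faces of every positive cardinality l.  Below ldeg I no l-set lies in I, so all l-sets
  are non-faces of I and hence, by counting, faces of the facet complex: each is obtained
  from a minimal generator by deleting variables.  Above deg I the facet complex has no
  l-faces, so neither has the Stanley-Reisner complex: every l-set lies in I and is obtained
  from a minimal generator by adding variables.\<close>

lemma sq_cap_funpow_mem:
  assumes "g \<in> A" "finite g"
  shows "h \<subseteq> g \<Longrightarrow> h \<noteq> {} \<Longrightarrow> card (g - h) = k \<Longrightarrow> h \<in> (sq_cap ^^ k) A"
proof (induction k arbitrary: h)
  case 0
  then have "h = g" using assms(2) by (simp add: finite_subset)
  then show ?case using assms(1) by simp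
next
  case (Suc k)
  then obtain i where i: "i \<in> g - h" by (metis card.empty ex_in_conv nat.distinct(1))
  have "card (g - insert i h) = k"
    using Suc.prems(3) i by (metis Diff_insert card_Diff_singleton diff_Suc_1)
  then have "insert i h \<in> (sq_cap ^^ k) A"
    using Suc.IH Suc.prems(1) i by auto
  moreover have "h = insert i h - {i}" using i by auto
  ultimately show ?case
    unfolding funpow.simps o_apply sq_cap_def using Suc.prems(2) by blast
qed

lemma sq_cap_inf_mem:
  assumes "g \<in> A" "finite g" "h \<subset> g" "h \<noteq> {}"
  shows "h \<in> sq_cap_inf A"
proof -
  have "card (g - h) \<ge> 1" using assms(2,3) by (simp add: Suc_leI card_gt_0_iff)
  then show ?thesis
    unfolding sq_cap_inf_def using sq_cap_funpow_mem[OF assms(1,2)] assms(3,4) by blast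
qed

lemma sq_cup_funpow_mem:
  assumes "g \<in> A"
  shows "g \<subseteq> h \<Longrightarrow> h \<subseteq> {1..n} \<Longrightarrow> card (h - g) = k \<Longrightarrow> h \<in> (sq_cup n ^^ k) A"
proof (induction k arbitrary: h)
  case 0
  have "finite h" using "0.prems"(2) finite_subset by blast
  then have "h = g" using "0.prems" by auto
  then show ?case using assms by simp
next
  case (Suc k)
  have fh: "finite h" using Suc.prems(2) finite_subset by blast
  obtain i where i: "i \<in> h - g" using Suc.prems(3) by (metis card.empty ex_in_conv nat.distinct(1))
  have "card (h - {i} - g) = k"
    using Suc.prems(3) i fh by (metis Diff_insert2 Diff_insert card_Diff_singleton diff_Suc_1 finite_Diff)
  then have "h - {i} \<in> (sq_cup n ^^ k) A"
    using Suc.IH[of "h - {i}"] Suc.prems(1,2) i by blast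
  moreover have "h = insert i (h - {i})" using i by auto
  moreover have "i \<in> {1..n}" using i Suc.prems(2) by auto
  ultimately show ?case
    unfolding funpow.simps o_apply sq_cup_def by blast
qed

lemma sq_cup_inf_mem:
  assumes "g \<in> A" "g \<subset> h" "h \<subseteq> {1..n}"
  shows "h \<in> sq_cup_inf n A"
proof -
  have "finite h" using assms(3) finite_subset by blast
  then have "card (h - g) \<ge> 1" using assms(2) by (simp add: Suc_leI card_gt_0_iff)
  then show ?thesis
    unfolding sq_cup_inf_def using sq_cup_funpow_mem[OF assms(1)] assms(2,3) by blast
qed
lemma gens_subset: "gens U \<subseteq> U"
  unfolding gens_def by auto

lemma exists_gens_subset:
  assumes "finite x" "x \<in> U"
  shows "\<exists>g\<in>gens U. g \<subseteq> x"
  using assms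
proof (induction "card x" arbitrary: x rule: less_induct)
  case less
  show ?case
  proof (cases "x \<in> gens U")
    case False
    then obtain h where h: "h \<in> U" "h \<subset> x" using less.prems unfolding gens_def by auto
    then have "card h < card x" using less.prems(1) by (simp add: psubset_card_mono)
    then show ?thesis using less h by (meson finite_subset psubset_imp_subset order_trans)
  qed blast
qed

lemma sqfree_monomial_ideal_finite_mem:
  "sqfree_monomial_ideal n U \<Longrightarrow> x \<in> U \<Longrightarrow> finite x"
  unfolding sqfree_monomial_ideal_def by (auto intro: finite_subset)

lemma sqfree_monomial_ideal_finite_gens:
  "sqfree_monomial_ideal n U \<Longrightarrow> finite (gens U)"
  unfolding sqfree_monomial_ideal_def using gens_subset
  by (meson finite_Pow_iff finite_atLeastAtMost finite_subset)

lemma ldeg_le_card_gens: "finite (gens U) \<Longrightarrow> g \<in> gens U \<Longrightarrow> ldeg U \<le> card g"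
  unfolding ldeg_def by simp

lemma card_gens_le_deg: "finite (gens U) \<Longrightarrow> g \<in> gens U \<Longrightarrow> card g \<le> deg U"
  unfolding deg_def by simp

lemma f_ideal_imp_sqfree_monomial_ideal: "f_ideal n U \<Longrightarrow> sqfree_monomial_ideal n U"
  unfolding f_ideal_def by simp

lemma f_ideal_card_faces_eq:
  assumes "f_ideal n U" "0 < l"
  shows "card {F \<in> facet_complex U. card F = l} = card {F \<in> sr_complex n U. card F = l}"
proof -
  have "f_vector (facet_complex U) (l - 1) = f_vector (sr_complex n U) (l - 1)"
    using assms(1) unfolding f_ideal_def by simp
  then show ?thesis unfolding f_vector_def using assms(2) by simp
qed

lemma f_ideal_sm_subset_facet_complex:
  assumes "f_ideal n U" "0 < l" "l < ldeg U"
  shows "sm n l \<subseteq> facet_complex U"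
proof -
  have I: "sqfree_monomial_ideal n U" using assms(1) by (rule f_ideal_imp_sqfree_monomial_ideal)
  have "x \<notin> U" if "x \<in> sm n l" for x
  proof
    assume "x \<in> U"
    then obtain g where g: "g \<in> gens U" "g \<subseteq> x"
      using exists_gens_subset sqfree_monomial_ideal_finite_mem[OF I] by blast
    have "card g \<le> l"
      using g that sqfree_monomial_ideal_finite_mem[OF I \<open>x \<in> U\<close>] card_mono
      unfolding sm_def by fastforce
    moreover have "ldeg U \<le> card g"
      using ldeg_le_card_gens[OF sqfree_monomial_ideal_finite_gens[OF I] g(1)] .
    ultimately show False using assms(3) by simp
  qed
  then have "{F \<in> sr_complex n U. card F = l} = sm n l"
    unfolding sr_complex_def sm_def by auto
  moreover have faces: "{F \<in> facet_complex U. card F = l} \<subseteq> sm n l"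
    using I gens_subset unfolding facet_complex_def sm_def sqfree_monomial_ideal_def by blast
  moreover have "finite (sm n l)"
    unfolding sm_def by (rule finite_subset[of _ "Pow {1..n}"]) auto
  ultimately have "{F \<in> facet_complex U. card F = l} = sm n l"
    using card_subset_eq f_ideal_card_faces_eq[OF assms(1,2)] by metis
  then show ?thesis by blast
qed

lemma f_ideal_sm_subset_ideal:
  assumes "f_ideal n U" "deg U < l"
  shows "sm n l \<subseteq> U"
proof -
  have I: "sqfree_monomial_ideal n U" using assms(1) by (rule f_ideal_imp_sqfree_monomial_ideal)
  have "{F \<in> facet_complex U. card F = l} = {}"
  proof (rule ccontr)
    assume "{F \<in> facet_complex U. card F = l} \<noteq> {}"
    then obtain F g where F: "card F = l" "g \<in> gens U" "F \<subseteq> g"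
      unfolding facet_complex_def by auto
    have "finite g" using F(2) gens_subset sqfree_monomial_ideal_finite_mem[OF I] by blast
    then have "card F \<le> card g" using F(3) by (rule card_mono)
    then show False
      using F assms(2) card_gens_le_deg[OF sqfree_monomial_ideal_finite_gens[OF I]] by fastforce
  qed
  then have "card {F \<in> sr_complex n U. card F = l} = 0"
    using f_ideal_card_faces_eq[OF assms(1), of l] assms(2) by (metis card.empty gr_zeroI not_less0)
  moreover have "finite {F \<in> sr_complex n U. card F = l}"
    unfolding sr_complex_def by (rule finite_subset[of _ "Pow {1..n}"]) auto
  ultimately show ?thesis unfolding sr_complex_def sm_def by auto
qed

theorem corollary6p4:
  fixes n l :: nat and U :: "nat set set"
  assumes "f_ideal n U"
    and "l \<in> {1..n}"
  shows "(l < ldeg U \<longrightarrow> sm n l \<subseteq> sq_cap_inf (gens U))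
       \<and> (l > deg U \<longrightarrow> sm n l \<subseteq> sq_cup_inf n (gens U))"
proof -
  have I: "sqfree_monomial_ideal n U" using assms(1) by (rule f_ideal_imp_sqfree_monomial_ideal)
  have fin: "finite (gens U)" using I by (rule sqfree_monomial_ideal_finite_gens)
  have fin_gen: "finite g" if "g \<in> gens U" for g
    using that gens_subset sqfree_monomial_ideal_finite_mem[OF I] by blast
  have "sm n l \<subseteq> sq_cap_inf (gens U)" if lt: "l < ldeg U"
  proof
    fix x assume x: "x \<in> sm n l"
    then obtain g where g: "g \<in> gens U" "x \<subseteq> g"
      using f_ideal_sm_subset_facet_complex[OF assms(1) _ lt] assms(2)
      unfolding facet_complex_def by fastforce
    moreover have "x \<noteq> g" "x \<noteq> {}"
      using x lt assms(2) ldeg_le_card_gens[OF fin g(1)] unfolding sm_def by auto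
    ultimately show "x \<in> sq_cap_inf (gens U)"
      using sq_cap_inf_mem[OF g(1) fin_gen[OF g(1)]] by blast
  qed
  moreover have "sm n l \<subseteq> sq_cup_inf n (gens U)" if gt: "deg U < l"
  proof
    fix x assume x: "x \<in> sm n l"
    then have "x \<in> U" using f_ideal_sm_subset_ideal[OF assms(1) gt] by blast
    then obtain g where g: "g \<in> gens U" "g \<subseteq> x"
      using exists_gens_subset sqfree_monomial_ideal_finite_mem[OF I] by blast
    moreover have "g \<noteq> x"
      using x gt card_gens_le_deg[OF fin g(1)] unfolding sm_def by auto
    ultimately show "x \<in> sq_cup_inf n (gens U)"
      using sq_cup_inf_mem[OF g(1)] x unfolding sm_def by blast
  qed
  ultimately show ?thesis by blast
qed

end
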